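(* Let $\alpha_1\in(0,1)$ be irrational and define $\alpha_{n+1}=1-\left\lfloor \frac{1}{\alpha_n}\right\rfloor\alpha_n$ for $n=1,2,\ldots$, where $\lfloor\cdot\rfloor$ is the floor function. Then $\lim_{n\to\infty}\alpha_n=0$. *)

theory Defs
  imports Complex_Main
begin

end

theory Submission
  imports Defs
begin

text \<open>The sequence is the orbit \<open>\<alpha>\<^sub>n\<^sub>+\<^sub>1 = T\<^sup>n \<alpha>\<^sub>1\<close> of \<open>T x = 1 - \<lfloor>1/x\<rfloor> x\<close>. On irrationals
  in \<open>(0,1)\<close> the map \<open>T\<close> stays in \<open>(0,1)\<close>, decreases its argument and strictly increases
  \<open>\<lfloor>1/x\<rfloor>\<close>: were \<open>\<lfloor>1/x\<rfloor> = \<lfloor>1/T x\<rfloor> = k\<close>, then \<open>T (T x) - T x = -k (T x - x) > 0\<close>,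
  contradicting \<open>T (T x) < T x\<close>. Hence \<open>\<lfloor>1/T\<^sup>n x\<rfloor> > n\<close>, so \<open>T\<^sup>n x \<le> 1/(n+1)\<close>.\<close>

definition floor_recip_step :: "real \<Rightarrow> real" where
  "floor_recip_step x = 1 - of_int \<lfloor>1 / x\<rfloor> * x"

lemma floor_recip_mult_le_1:
  fixes x :: real
  assumes "0 < x"
  shows "of_int \<lfloor>1 / x\<rfloor> * x \<le> 1"
proof -
  have "of_int \<lfloor>1 / x\<rfloor> \<le> 1 / x" by linarith
  then show ?thesis using assms by (simp add: le_divide_eq)
qed

lemma floor_recip_succ_mult_gt_1:
  fixes x :: real
  assumes "0 < x"
  shows "1 < (of_int \<lfloor>1 / x\<rfloor> + 1) * x"
proof -
  have "1 / x < of_int \<lfloor>1 / x\<rfloor> + 1" by linarith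
  with assms show ?thesis by (simp add: field_simps)
qed

lemma floor_recip_ge_1:
  fixes x :: real
  assumes "0 < x" "x \<le> 1"
  shows "1 \<le> \<lfloor>1 / x\<rfloor>"
  using assms by (simp add: one_le_floor field_simps)

lemma floor_recip_step_less:
  assumes "0 < x"
  shows "floor_recip_step x < x"
  using floor_recip_succ_mult_gt_1[OF assms] by (simp add: floor_recip_step_def algebra_simps)

lemma floor_recip_step_pos:
  assumes "0 < x" "x \<notin> \<rat>"
  shows "0 < floor_recip_step x"
proof -
  have "of_int \<lfloor>1 / x\<rfloor> * x \<noteq> 1"
  proof
    assume "of_int \<lfloor>1 / x\<rfloor> * x = 1"
    then have "x = 1 / of_int \<lfloor>1 / x\<rfloor>" by (auto simp: eq_divide_eq algebra_simps)
    with \<open>x \<notin> \<rat>\<close> show False by (metis Rats_divide Rats_of_int Rats_1)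
  qed
  with floor_recip_mult_le_1[OF \<open>0 < x\<close>] show ?thesis
    by (simp add: floor_recip_step_def)
qed

lemma floor_recip_step_irrational:
  assumes "0 < x" "x \<le> 1" "x \<notin> \<rat>"
  shows "floor_recip_step x \<notin> \<rat>"
proof
  let ?k = "\<lfloor>1 / x\<rfloor>"
  assume "floor_recip_step x \<in> \<rat>"
  then have "(1 - floor_recip_step x) / of_int ?k \<in> \<rat>" by simp
  moreover have "of_int ?k \<noteq> (0::real)" using floor_recip_ge_1[OF assms(1,2)] by (simp del: one_le_floor)
  then have "(1 - floor_recip_step x) / of_int ?k = x" by (simp add: floor_recip_step_def)
  ultimately show False using \<open>x \<notin> \<rat>\<close> by simp
qed

lemma floor_recip_less_floor_recip_step:
  assumes "0 < x" "x \<le> 1" and pos: "0 < floor_recip_step x"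
  shows "\<lfloor>1 / x\<rfloor> < \<lfloor>1 / floor_recip_step x\<rfloor>"
proof -
  let ?y = "floor_recip_step x"
  have "?y < x" using floor_recip_step_less[OF \<open>0 < x\<close>] .
  then have "\<lfloor>1 / x\<rfloor> \<le> \<lfloor>1 / ?y\<rfloor>"
    using pos by (intro floor_mono) (simp add: frac_le)
  moreover have "\<lfloor>1 / x\<rfloor> \<noteq> \<lfloor>1 / ?y\<rfloor>"
  proof
    assume eq: "\<lfloor>1 / x\<rfloor> = \<lfloor>1 / ?y\<rfloor>"
    have "floor_recip_step ?y - ?y = (1 - of_int \<lfloor>1 / x\<rfloor> * ?y) - (1 - of_int \<lfloor>1 / x\<rfloor> * x)"
      by (simp only: floor_recip_step_def[of ?y] eq[symmetric]) (simp add: floor_recip_step_def)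
    also have "\<dots> = - of_int \<lfloor>1 / x\<rfloor> * (?y - x)" by (simp add: algebra_simps)
    also have "\<dots> > 0"
      using \<open>?y < x\<close> floor_recip_ge_1[OF assms(1,2)] by (simp add: mult_pos_neg)
    finally show False using floor_recip_step_less[OF pos] by simp
  qed
  ultimately show ?thesis by simp
qed

lemma floor_recip_step_maps_unit_irrationals:
  assumes "x \<in> {0<..<1} - \<rat>"
  shows "floor_recip_step x \<in> {0<..<1} - \<rat>"
  using assms floor_recip_step_pos[of x] floor_recip_step_less[of x] floor_recip_step_irrational[of x]
  by auto

lemma funpow_floor_recip_step_unit_irrational:
  assumes "x \<in> {0<..<1} - \<rat>"
  shows "(floor_recip_step ^^ n) x \<in> {0<..<1} - \<rat>"
proof (induction n)
  case (Suc n)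
  then show ?case using floor_recip_step_maps_unit_irrationals by simp
qed (use assms in simp)

lemma floor_recip_funpow_floor_recip_step_gt:
  assumes "x \<in> {0<..<1} - \<rat>"
  shows "int n < \<lfloor>1 / (floor_recip_step ^^ n) x\<rfloor>"
proof (induction n)
  case 0
  show ?case using assms floor_recip_ge_1[of x] by simp
next
  case (Suc n)
  let ?y = "(floor_recip_step ^^ n) x"
  have "?y \<in> {0<..<1} - \<rat>" "floor_recip_step ?y \<in> {0<..<1} - \<rat>"
    using funpow_floor_recip_step_unit_irrational[OF assms, of n]
      funpow_floor_recip_step_unit_irrational[OF assms, of "Suc n"]
    by simp_all
  then have "\<lfloor>1 / ?y\<rfloor> < \<lfloor>1 / floor_recip_step ?y\<rfloor>"
    by (intro floor_recip_less_floor_recip_step) auto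
  with Suc.IH show ?case by simp
qed

lemma funpow_floor_recip_step_le:
  assumes "x \<in> {0<..<1} - \<rat>"
  shows "(floor_recip_step ^^ n) x \<le> inverse (real (Suc n))"
proof -
  let ?y = "(floor_recip_step ^^ n) x"
  have "0 < ?y" using funpow_floor_recip_step_unit_irrational[OF assms, of n] by simp
  have "real (Suc n) * ?y \<le> of_int \<lfloor>1 / ?y\<rfloor> * ?y"
    using floor_recip_funpow_floor_recip_step_gt[OF assms, of n] \<open>0 < ?y\<close>
    by (intro mult_right_mono) linarith+
  also have "\<dots> \<le> 1" using \<open>0 < ?y\<close> by (rule floor_recip_mult_le_1)
  finally show ?thesis by (simp add: field_simps)
qed

lemma funpow_floor_recip_step_tendsto_0:
  assumes "x \<in> {0<..<1} - \<rat>"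
  shows "(\<lambda>n. (floor_recip_step ^^ n) x) \<longlonglongrightarrow> 0"
proof (rule real_tendsto_sandwich[OF _ _ tendsto_const LIMSEQ_inverse_real_of_nat])
  show "\<forall>\<^sub>F n in sequentially. 0 \<le> (floor_recip_step ^^ n) x"
    using funpow_floor_recip_step_unit_irrational[OF assms] by (intro always_eventually) (fastforce intro: less_imp_le)
  show "\<forall>\<^sub>F n in sequentially. (floor_recip_step ^^ n) x \<le> inverse (real (Suc n))"
    using funpow_floor_recip_step_le[OF assms] by (intro always_eventually) blast
qed

theorem lemma2p3:
  fixes \<alpha> :: "nat \<Rightarrow> real"
  assumes "0 < \<alpha> 1" and "\<alpha> 1 < 1"
    and "\<alpha> 1 \<notin> \<rat>"
    and "\<And>n. n \<ge> 1 \<Longrightarrow> \<alpha> (Suc n) = 1 - of_int \<lfloor>1 / \<alpha> n\<rfloor> * \<alpha> n"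
  shows "\<alpha> \<longlonglongrightarrow> 0"
proof -
  have orbit: "\<alpha> (Suc n) = (floor_recip_step ^^ n) (\<alpha> 1)" for n
  proof (induction n)
    case (Suc n)
    have "\<alpha> (Suc (Suc n)) = floor_recip_step (\<alpha> (Suc n))"
      using assms(4)[of "Suc n"] by (simp add: floor_recip_step_def)
    with Suc.IH show ?case by simp
  qed simp
  have "\<alpha> 1 \<in> {0<..<1} - \<rat>" using assms(1-3) by simp
  then have "(\<lambda>n. \<alpha> (Suc n)) \<longlonglongrightarrow> 0"
    unfolding orbit by (rule funpow_floor_recip_step_tendsto_0)
  then show ?thesis by (rule LIMSEQ_imp_Suc)
qed

end
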